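(* Let $(\mathcal{A},\mu,\alpha)$ be a Hom-flexible superalgebra and $\mathcal{A}^-=(\mathcal{A},[-,-],\alpha)$ with $[x,y]=xy-(-1)^{|x||y|}yx$. Then $\widetilde{J}_{\mathcal{A}^-}=2S_{\mathcal{A}}$, i.e. for all homogeneous $x,y,z$, $[[x,y],\alpha(z)]-[\alpha(x),[y,z]]-(-1)^{|y||z|}[[x,z],\alpha(y)]=2\big(\widetilde{as}(x,y,z)+(-1)^{|x|(|y|+|z|)}\widetilde{as}(y,z,x)+(-1)^{|z|(|x|+|y|)}\widetilde{as}(z,x,y)\big)$.
   Context: $\mathcal{A}=\mathcal{A}_0\oplus\mathcal{A}_1$ is a $\mathbb{Z}_2$-graded vector space over an algebraically closed field $\mathbb{K}$ of characteristic $0$; $|x|$ is the parity of homogeneous $x$; $\mu(x,y)=xy$ is even bilinear and $\alpha$ even linear. $\widetilde{as}(x,y,z)=(xy)\alpha(z)-\alpha(x)(yz)$. A Hom-flexible superalgebra is a triple $(\mathcal{A},\mu,\alpha)$ with $\widetilde{as}(x,y,z)+(-1)^{|x||y|+|x||z|+|y||z|}\widetilde{as}(z,y,x)=0$ for all homogeneous $x,y,z$. $S_{\mathcal{A}}$ denotes the cyclic Hom-associator $S_{\mathcal{A}}(x,y,z)=\widetilde{as}(x,y,z)+(-1)^{|x|(|y|+|z|)}\widetilde{as}(y,z,x)+(-1)^{|z|(|x|+|y|)}\widetilde{as}(z,x,y)$. *)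

theory Defs
  imports Main "HOL-Computational_Algebra.Polynomial"
begin

definition alg_closed :: "'k::field itself \<Rightarrow> bool" where
  "alg_closed _ \<longleftrightarrow> (\<forall>p :: 'k poly. degree p > 0 \<longrightarrow> (\<exists>x. poly p x = 0))"

definition gr :: "'v set \<Rightarrow> 'v set \<Rightarrow> nat \<Rightarrow> 'v set" where
  "gr A0 A1 i = (if even i then A0 else A1)"

definition homog :: "'v set \<Rightarrow> 'v set \<Rightarrow> 'v \<Rightarrow> bool" where
  "homog A0 A1 x \<longleftrightarrow> x \<in> A0 \<or> x \<in> A1"

text \<open>Parity |x| of a homogeneous element (0 if even, 1 otherwise; the zero vector gets 0).\<close>
definition par :: "'v set \<Rightarrow> 'v \<Rightarrow> nat" where
  "par A0 x = (if x \<in> A0 then 0 else 1)"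

definition sg :: "nat \<Rightarrow> 'v::ab_group_add \<Rightarrow> 'v" where
  "sg n v = (if even n then v else - v)"

definition Z2_graded :: "('k::field \<Rightarrow> 'v::ab_group_add \<Rightarrow> 'v) \<Rightarrow> 'v set \<Rightarrow> 'v set \<Rightarrow> bool" where
  "Z2_graded scale A0 A1 \<longleftrightarrow> vector_space scale \<and> module.subspace scale A0 \<and> module.subspace scale A1
     \<and> A0 \<inter> A1 = {0} \<and> (\<forall>v. \<exists>a\<in>A0. \<exists>b\<in>A1. v = a + b)"

definition even_bilinear :: "('k::field \<Rightarrow> 'v::ab_group_add \<Rightarrow> 'v) \<Rightarrow> 'v set \<Rightarrow> 'v set \<Rightarrow> ('v \<Rightarrow> 'v \<Rightarrow> 'v) \<Rightarrow> bool" where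
  "even_bilinear scale A0 A1 m \<longleftrightarrow>
     (\<forall>x. Vector_Spaces.linear scale scale (m x)) \<and> (\<forall>y. Vector_Spaces.linear scale scale (\<lambda>x. m x y))
     \<and> (\<forall>i j x y. x \<in> gr A0 A1 i \<and> y \<in> gr A0 A1 j \<longrightarrow> m x y \<in> gr A0 A1 (i + j))"

definition even_linear :: "('k::field \<Rightarrow> 'v::ab_group_add \<Rightarrow> 'v) \<Rightarrow> 'v set \<Rightarrow> 'v set \<Rightarrow> ('v \<Rightarrow> 'v) \<Rightarrow> bool" where
  "even_linear scale A0 A1 f \<longleftrightarrow> Vector_Spaces.linear scale scale f
     \<and> (\<forall>i x. x \<in> gr A0 A1 i \<longrightarrow> f x \<in> gr A0 A1 i)"

definition hom_as :: "('v \<Rightarrow> 'v \<Rightarrow> 'v) \<Rightarrow> ('v \<Rightarrow> 'v) \<Rightarrow> 'v \<Rightarrow> 'v \<Rightarrow> 'v \<Rightarrow> 'v::ab_group_add" where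
  "hom_as m \<alpha> x y z = m (m x y) (\<alpha> z) - m (\<alpha> x) (m y z)"

definition hom_flexible_super ::
  "('k::field \<Rightarrow> 'v::ab_group_add \<Rightarrow> 'v) \<Rightarrow> 'v set \<Rightarrow> 'v set \<Rightarrow> ('v \<Rightarrow> 'v \<Rightarrow> 'v) \<Rightarrow> ('v \<Rightarrow> 'v) \<Rightarrow> bool" where
  "hom_flexible_super scale A0 A1 m \<alpha> \<longleftrightarrow>
     Z2_graded scale A0 A1 \<and> even_bilinear scale A0 A1 m \<and> even_linear scale A0 A1 \<alpha>
     \<and> (\<forall>x y z. homog A0 A1 x \<and> homog A0 A1 y \<and> homog A0 A1 z \<longrightarrow>
          hom_as m \<alpha> x y z
          + sg (par A0 x * par A0 y + par A0 x * par A0 z + par A0 y * par A0 z) (hom_as m \<alpha> z y x) = 0)"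

definition scomm :: "'v set \<Rightarrow> ('v \<Rightarrow> 'v \<Rightarrow> 'v) \<Rightarrow> 'v \<Rightarrow> 'v \<Rightarrow> 'v::ab_group_add" where
  "scomm A0 m x y = m x y - sg (par A0 x * par A0 y) (m y x)"

definition cyc_as :: "'v set \<Rightarrow> ('v \<Rightarrow> 'v \<Rightarrow> 'v) \<Rightarrow> ('v \<Rightarrow> 'v) \<Rightarrow> 'v \<Rightarrow> 'v \<Rightarrow> 'v \<Rightarrow> 'v::ab_group_add" where
  "cyc_as A0 m \<alpha> x y z = hom_as m \<alpha> x y z
     + sg (par A0 x * (par A0 y + par A0 z)) (hom_as m \<alpha> y z x)
     + sg (par A0 z * (par A0 x + par A0 y)) (hom_as m \<alpha> z x y)"

end

theory Submission
  imports Defs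
begin

text \<open>Expanding the three super-commutators by bilinearity writes the super-Jacobiator
as a signed sum of the six Hom-associators of x, y, z in all orders. Super
Hom-flexibility identifies the associator of a reversed triple with the original one
up to a sign, so the three "odd" permutations contribute exactly a second copy of the
three cyclic ones, which yields 2 S.\<close>

lemma sg_sg [simp]: "sg n (sg n v) = v"
  by (simp add: sg_def)

lemma sg_minus: "sg n (- v) = - sg n v"
  by (simp add: sg_def)

lemma par_cases: "par A0 x = 0 \<or> par A0 x = 1"
  by (simp add: par_def)

lemma homog_in_gr_par: "homog A0 A1 x \<Longrightarrow> x \<in> gr A0 A1 (par A0 x)"
  by (auto simp: homog_def gr_def par_def)

lemma even_par_iff:
  assumes "A0 \<inter> A1 = {0}" "u \<in> gr A0 A1 i" "u \<noteq> 0"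
  shows "even (par A0 u) \<longleftrightarrow> even i"
  using assms unfolding gr_def par_def by (cases "even i") auto

locale hom_flexible_superalgebra =
  fixes scale :: "'k::field \<Rightarrow> 'v::ab_group_add \<Rightarrow> 'v"
    and A0 A1 :: "'v set" and m :: "'v \<Rightarrow> 'v \<Rightarrow> 'v" and \<alpha> :: "'v \<Rightarrow> 'v"
  assumes hom_flexible_super: "hom_flexible_super scale A0 A1 m \<alpha>"
begin

lemma graded: "Z2_graded scale A0 A1"
  and mult_even_bilinear: "even_bilinear scale A0 A1 m"
  and alpha_even_linear: "even_linear scale A0 A1 \<alpha>"
  using hom_flexible_super by (simp_all add: hom_flexible_super_def)

lemma graded_trivial_intersection: "A0 \<inter> A1 = {0}"
  using graded by (simp add: Z2_graded_def)

lemma flexible: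
  "\<lbrakk>homog A0 A1 x; homog A0 A1 y; homog A0 A1 z\<rbrakk> \<Longrightarrow>
    hom_as m \<alpha> x y z
    + sg (par A0 x * par A0 y + par A0 x * par A0 z + par A0 y * par A0 z) (hom_as m \<alpha> z y x) = 0"
  using hom_flexible_super by (simp add: hom_flexible_super_def)

lemma hom_as_reverse:
  assumes "homog A0 A1 x" "homog A0 A1 y" "homog A0 A1 z"
  shows "hom_as m \<alpha> z y x
    = - sg (par A0 x * par A0 y + par A0 x * par A0 z + par A0 y * par A0 z) (hom_as m \<alpha> x y z)"
  (is "_ = - sg ?e _")
proof -
  have "sg ?e (hom_as m \<alpha> z y x) = - hom_as m \<alpha> x y z"
    using flexible[OF assms] by (simp add: eq_neg_iff_add_eq_0 add.commute)
  then show ?thesis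
    by (metis sg_sg sg_minus)
qed

lemma mult_module_hom_left: "module_hom scale scale (\<lambda>v. m v u)"
  and mult_module_hom_right: "module_hom scale scale (m u)"
  using mult_even_bilinear by (simp_all add: even_bilinear_def linear_iff_module_hom)

lemma mult_zero_left [simp]: "m 0 u = 0"
  and mult_minus_left [simp]: "m (- v) u = - m v u"
  and mult_diff_left: "m (v - w) u = m v u - m w u"
  using module_hom.zero[OF mult_module_hom_left] module_hom.neg[OF mult_module_hom_left]
    module_hom.diff[OF mult_module_hom_left] by simp_all

lemma mult_zero_right [simp]: "m u 0 = 0"
  and mult_minus_right [simp]: "m u (- v) = - m u v"
  and mult_diff_right: "m u (v - w) = m u v - m u w"
  using module_hom.zero[OF mult_module_hom_right] module_hom.neg[OF mult_module_hom_right]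
    module_hom.diff[OF mult_module_hom_right] by simp_all

lemma mult_sg_left: "m (sg n v) u = sg n (m v u)"
  and mult_sg_right: "m u (sg n v) = sg n (m u v)"
  by (simp_all add: sg_def)

lemma mult_gr: "u \<in> gr A0 A1 i \<Longrightarrow> v \<in> gr A0 A1 j \<Longrightarrow> m u v \<in> gr A0 A1 (i + j)"
  using mult_even_bilinear by (simp add: even_bilinear_def)

lemma alpha_gr: "u \<in> gr A0 A1 i \<Longrightarrow> \<alpha> u \<in> gr A0 A1 i"
  using alpha_even_linear by (simp add: even_linear_def)

lemma gr_diff_sg:
  assumes "u \<in> gr A0 A1 i" "v \<in> gr A0 A1 i"
  shows "u - sg n v \<in> gr A0 A1 i"
proof -
  have M: "module scale"
    using graded by (simp add: Z2_graded_def module_iff_vector_space)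
  have "module.subspace scale (gr A0 A1 i)"
    using graded by (simp add: Z2_graded_def gr_def)
  then show ?thesis
    using assms module.subspace_diff[OF M] module.subspace_add[OF M] module.subspace_neg[OF M]
    by (auto simp: sg_def)
qed

text \<open>The sign of a super-commutator may be read off from the degrees of its arguments,
even though par assigns the zero vector the even parity.\<close>
lemma scomm_eq:
  assumes "u \<in> gr A0 A1 i" "v \<in> gr A0 A1 j"
  shows "scomm A0 m u v = m u v - sg (i * j) (m v u)"
proof (cases "u = 0 \<or> v = 0")
  case True
  then show ?thesis by (auto simp: scomm_def sg_def)
next
  case False
  then show ?thesis
    using assms even_par_iff[OF graded_trivial_intersection]
    by (simp add: scomm_def sg_def)
qed

lemma scomm_gr:
  assumes "u \<in> gr A0 A1 i" "v \<in> gr A0 A1 j"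
  shows "scomm A0 m u v \<in> gr A0 A1 (i + j)"
  using gr_diff_sg[OF mult_gr[OF assms], of "m v u"] mult_gr[OF assms(2,1)]
  by (simp add: scomm_eq[OF assms] add.commute)

lemma super_jacobiator_expansion:
  assumes "homog A0 A1 x" "homog A0 A1 y" "homog A0 A1 z"
  defines "a \<equiv> par A0 x" and "b \<equiv> par A0 y" and "c \<equiv> par A0 z"
  shows "scomm A0 m (scomm A0 m x y) (\<alpha> z) - scomm A0 m (\<alpha> x) (scomm A0 m y z)
           - sg (b * c) (scomm A0 m (scomm A0 m x z) (\<alpha> y))
         = hom_as m \<alpha> x y z + sg (a * (b + c)) (hom_as m \<alpha> y z x)
           + sg (c * (a + b)) (hom_as m \<alpha> z x y)
           - sg (a * b) (hom_as m \<alpha> y x z) - sg (b * c) (hom_as m \<alpha> x z y)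
           - sg (a * b + a * c + b * c) (hom_as m \<alpha> z y x)"
proof -
  have x: "x \<in> gr A0 A1 a" and y: "y \<in> gr A0 A1 b" and z: "z \<in> gr A0 A1 c"
    using assms homog_in_gr_par by simp_all
  have "scomm A0 m (scomm A0 m x y) (\<alpha> z)
      = m (m x y - sg (a * b) (m y x)) (\<alpha> z) - sg ((a + b) * c) (m (\<alpha> z) (m x y - sg (a * b) (m y x)))"
    using scomm_eq[OF scomm_gr[OF x y] alpha_gr[OF z]] scomm_eq[OF x y] by simp
  moreover have "scomm A0 m (\<alpha> x) (scomm A0 m y z)
      = m (\<alpha> x) (m y z - sg (b * c) (m z y)) - sg (a * (b + c)) (m (m y z - sg (b * c) (m z y)) (\<alpha> x))"
    using scomm_eq[OF alpha_gr[OF x] scomm_gr[OF y z]] scomm_eq[OF y z] by simp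
  moreover have "scomm A0 m (scomm A0 m x z) (\<alpha> y)
      = m (m x z - sg (a * c) (m z x)) (\<alpha> y) - sg ((a + c) * b) (m (\<alpha> y) (m x z - sg (a * c) (m z x)))"
    using scomm_eq[OF scomm_gr[OF x z] alpha_gr[OF y]] scomm_eq[OF x z] by simp
  moreover have "a = 0 \<or> a = 1" "b = 0 \<or> b = 1" "c = 0 \<or> c = 1"
    unfolding a_def b_def c_def by (rule par_cases)+
  ultimately show ?thesis
    unfolding hom_as_def
    by (simp only: mult_diff_left mult_diff_right mult_sg_left mult_sg_right)
      (elim disjE; simp add: sg_def algebra_simps)
qed

theorem super_jacobiator_eq_twice_cyc_as:
  assumes "homog A0 A1 x" "homog A0 A1 y" "homog A0 A1 z"
  shows "scomm A0 m (scomm A0 m x y) (\<alpha> z) - scomm A0 m (\<alpha> x) (scomm A0 m y z)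
           - sg (par A0 y * par A0 z) (scomm A0 m (scomm A0 m x z) (\<alpha> y))
         = cyc_as A0 m \<alpha> x y z + cyc_as A0 m \<alpha> x y z"
proof -
  have "hom_as m \<alpha> y x z
      = - sg (par A0 x * par A0 y + par A0 x * par A0 z + par A0 y * par A0 z) (hom_as m \<alpha> z x y)"
    using hom_as_reverse[OF assms(3,1,2)] by (simp add: algebra_simps)
  moreover have "hom_as m \<alpha> x z y
      = - sg (par A0 x * par A0 y + par A0 x * par A0 z + par A0 y * par A0 z) (hom_as m \<alpha> y z x)"
    using hom_as_reverse[OF assms(2,3,1)] by (simp add: algebra_simps)
  moreover note hom_as_reverse[OF assms]
  moreover have "par A0 x = 0 \<or> par A0 x = 1" "par A0 y = 0 \<or> par A0 y = 1"
    "par A0 z = 0 \<or> par A0 z = 1"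
    by (rule par_cases)+
  ultimately show ?thesis
    unfolding super_jacobiator_expansion[OF assms] cyc_as_def
    by (elim disjE; simp add: sg_def)
qed

end

theorem mainTheorem18:
  fixes scale :: "'k::field_char_0 \<Rightarrow> 'v::ab_group_add \<Rightarrow> 'v"
    and A0 A1 :: "'v set" and m :: "'v \<Rightarrow> 'v \<Rightarrow> 'v" and \<alpha> :: "'v \<Rightarrow> 'v"
  assumes "alg_closed TYPE('k)"
    and "hom_flexible_super scale A0 A1 m \<alpha>"
    and "homog A0 A1 x" and "homog A0 A1 y" and "homog A0 A1 z"
  shows "scomm A0 m (scomm A0 m x y) (\<alpha> z) - scomm A0 m (\<alpha> x) (scomm A0 m y z)
           - sg (par A0 y * par A0 z) (scomm A0 m (scomm A0 m x z) (\<alpha> y))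
         = cyc_as A0 m \<alpha> x y z + cyc_as A0 m \<alpha> x y z"
proof -
  interpret hom_flexible_superalgebra scale A0 A1 m \<alpha>
    using assms(2) by unfold_locales
  show ?thesis
    using super_jacobiator_eq_twice_cyc_as[OF assms(3-5)] .
qed

end
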